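(* Let $P$ be a poset. If $P$ is well-quasi-ordered and the set $\mathcal{J}^{\neg\downarrow}(P)$ of non-principal ideals of $P$ is finite, then $P$ is better-quasi-ordered.
   Context: An ideal of $P$ is a nonempty initial segment of $P$ which is up-directed (any two elements have an upper bound in it); it is principal if it has a largest element. A quasi-ordered set is well-quasi-ordered (wqo) if it is well-founded and has no infinite antichain. Barriers and bqo: finite subsets of $\mathbb{N}$ are identified with their increasing enumerations. For finite $s,t\subseteq\mathbb{N}$ write $s\triangleleft t$ if there is a finite $r\subseteq\mathbb{N}$ such that $s$ is a proper initial segment of $r$ and $t$ is $r$ with its least element removed. A barrier is an infinite set $B$ of finite subsets of $\mathbb{N}$, no member of which is a proper subset of another, such that every infinite $X\subseteq\bigcup B$ has a nonempty initial segment belonging to $B$. A barrier is well-ordered by the lexicographic order; its order type is the type of this well-order. A map $f$ from a barrier $B$ into a quasi-ordered set $Q$ is good if there exist $s,t\in B$ with $s\triangleleft t$ and $f(s)\leq f(t)$, and bad otherwise. For a countable ordinal $\alpha$, $Q$ is $\alpha$-bqo if every map from a barrier of order type at most $\alpha$ into $Q$ is good; $Q$ is better-quasi-ordered (bqo) if it is $\alpha$-bqo for every countable ordinal $\alpha$. *)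

theory Defs
  imports Main
begin

definition quasi_order_on :: "'a set \<Rightarrow> ('a \<Rightarrow> 'a \<Rightarrow> bool) \<Rightarrow> bool" where
  "quasi_order_on P le \<longleftrightarrow> (\<forall>x\<in>P. le x x) \<and>
     (\<forall>x\<in>P. \<forall>y\<in>P. \<forall>z\<in>P. le x y \<longrightarrow> le y z \<longrightarrow> le x z)"

definition poset_on :: "'a set \<Rightarrow> ('a \<Rightarrow> 'a \<Rightarrow> bool) \<Rightarrow> bool" where
  "poset_on P le \<longleftrightarrow> quasi_order_on P le \<and>
     (\<forall>x\<in>P. \<forall>y\<in>P. le x y \<longrightarrow> le y x \<longrightarrow> x = y)"

definition ideal_of :: "'a set \<Rightarrow> ('a \<Rightarrow> 'a \<Rightarrow> bool) \<Rightarrow> 'a set \<Rightarrow> bool" where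
  "ideal_of P le I \<longleftrightarrow> I \<subseteq> P \<and> I \<noteq> {} \<and>
     (\<forall>x\<in>I. \<forall>y\<in>P. le y x \<longrightarrow> y \<in> I) \<and>
     (\<forall>x\<in>I. \<forall>y\<in>I. \<exists>z\<in>I. le x z \<and> le y z)"

definition principal :: "('a \<Rightarrow> 'a \<Rightarrow> bool) \<Rightarrow> 'a set \<Rightarrow> bool" where
  "principal le I \<longleftrightarrow> (\<exists>m\<in>I. \<forall>x\<in>I. le x m)"

definition nonprincipal_ideals :: "'a set \<Rightarrow> ('a \<Rightarrow> 'a \<Rightarrow> bool) \<Rightarrow> 'a set set" where
  "nonprincipal_ideals P le = {I. ideal_of P le I \<and> \<not> principal le I}"

definition wellfounded_on :: "'a set \<Rightarrow> ('a \<Rightarrow> 'a \<Rightarrow> bool) \<Rightarrow> bool" where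
  "wellfounded_on P le \<longleftrightarrow>
     \<not> (\<exists>g::nat \<Rightarrow> 'a. (\<forall>n. g n \<in> P) \<and> (\<forall>n. le (g (Suc n)) (g n) \<and> \<not> le (g n) (g (Suc n))))"

definition antichain_on :: "('a \<Rightarrow> 'a \<Rightarrow> bool) \<Rightarrow> 'a set \<Rightarrow> bool" where
  "antichain_on le A \<longleftrightarrow> (\<forall>x\<in>A. \<forall>y\<in>A. x \<noteq> y \<longrightarrow> \<not> le x y \<and> \<not> le y x)"

definition wqo_on :: "'a set \<Rightarrow> ('a \<Rightarrow> 'a \<Rightarrow> bool) \<Rightarrow> bool" where
  "wqo_on P le \<longleftrightarrow> quasi_order_on P le \<and> wellfounded_on P le \<and>
     \<not> (\<exists>A. A \<subseteq> P \<and> infinite A \<and> antichain_on le A)"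

definition init_seg :: "nat set \<Rightarrow> nat set \<Rightarrow> bool" where
  "init_seg s X \<longleftrightarrow> s \<subseteq> X \<and> (\<forall>x\<in>s. \<forall>y\<in>X. y < x \<longrightarrow> y \<in> s)"

definition tri :: "nat set \<Rightarrow> nat set \<Rightarrow> bool" where
  "tri s t \<longleftrightarrow> (\<exists>r. finite r \<and> init_seg s r \<and> s \<noteq> r \<and> t = r - {Min r})"

definition barrier :: "nat set set \<Rightarrow> bool" where
  "barrier B \<longleftrightarrow> infinite B \<and> (\<forall>s\<in>B. finite s) \<and>
     (\<forall>s\<in>B. \<forall>t\<in>B. \<not> s \<subset> t) \<and>
     (\<forall>X. X \<subseteq> \<Union>B \<longrightarrow> infinite X \<longrightarrow> (\<exists>s\<in>B. s \<noteq> {} \<and> init_seg s X))"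

text \<open>Lexicographic order on a barrier (sets identified with increasing enumerations),
  as a reflexive relation so that it can be compared with ordinals via ordLeq.\<close>
definition barrier_lex :: "nat set set \<Rightarrow> nat set rel" where
  "barrier_lex B = {(s, t). s \<in> B \<and> t \<in> B \<and>
     (s = t \<or> (sorted_list_of_set s, sorted_list_of_set t) \<in> lexord {(x, y). x < y})}"

definition good_map :: "('a \<Rightarrow> 'a \<Rightarrow> bool) \<Rightarrow> nat set set \<Rightarrow> (nat set \<Rightarrow> 'a) \<Rightarrow> bool" where
  "good_map le B f \<longleftrightarrow> (\<exists>s\<in>B. \<exists>t\<in>B. tri s t \<and> le (f s) (f t))"

text \<open>Countable ordinals are represented by well-orders on subsets of nat.\<close>
definition alpha_bqo_on :: "nat rel \<Rightarrow> 'a set \<Rightarrow> ('a \<Rightarrow> 'a \<Rightarrow> bool) \<Rightarrow> bool" where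
  "alpha_bqo_on \<alpha> P le \<longleftrightarrow> (\<forall>B f. barrier B \<longrightarrow> (barrier_lex B, \<alpha>) \<in> ordLeq \<longrightarrow>
     f ` B \<subseteq> P \<longrightarrow> good_map le B f)"

definition bqo_on :: "'a set \<Rightarrow> ('a \<Rightarrow> 'a \<Rightarrow> bool) \<Rightarrow> bool" where
  "bqo_on P le \<longleftrightarrow> quasi_order_on P le \<and> (\<forall>\<alpha>::nat rel. Well_order \<alpha> \<longrightarrow> alpha_bqo_on \<alpha> P le)"

end

(* A bad map from a barrier into a down-closed set D can always be moved into a strictly
   smaller down-closed subset of D; Nash-Williams' partition theorem lets us restrict a bad map
   to one side of any partition of its values. If D is not directed, it is the union of the two
   proper down-closed sets of points not above x, resp. y, for x and y without a common upper
   bound in D. If D has a greatest element m, the map cannot be bad on {m}, so it is bad on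
   D - {m}. If D is a nonprincipal ideal, let E be the union of the finitely many nonprincipal
   ideals strictly below D; E is proper because D is directed. Either the map is bad on E, or it
   is bad on D - E, where every x has only finitely many y with not x <= y (infinitely many
   would contain an increasing sequence generating a nonprincipal ideal below D that avoids x,
   hence lies in E). So the map moves along a finitely branching relation at every step of the
   barrier, so a sub-barrier takes only finitely many values, and their down-closure is a proper
   down-closed subset of D since D has no greatest element. Starting from P, this yields a
   strictly decreasing sequence of down-closed sets, which cannot exist in a wqo. *)

theory Submission
  imports Defs "HOL-Library.Ramsey"
begin

section \<open>Quasi-orders, down-closed sets and ideals\<close>

lemma
  assumes "quasi_order_on P le"
  shows quasi_order_on_refl: "x \<in> P \<Longrightarrow> le x x"
    and quasi_order_on_trans: "x \<in> P \<Longrightarrow> y \<in> P \<Longrightarrow> z \<in> P \<Longrightarrow> le x y \<Longrightarrow> le y z \<Longrightarrow> le x z"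
  using assms unfolding quasi_order_on_def by blast+

lemma poset_on_quasi_order_on: "poset_on P le \<Longrightarrow> quasi_order_on P le"
  unfolding poset_on_def by blast

lemma poset_on_antisym: "poset_on P le \<Longrightarrow> x \<in> P \<Longrightarrow> y \<in> P \<Longrightarrow> le x y \<Longrightarrow> le y x \<Longrightarrow> x = y"
  unfolding poset_on_def by blast

lemma wqo_on_increasing_subseq:
  assumes wqo: "wqo_on P le" and g: "\<And>n. g n \<in> P"
  obtains \<phi> :: "nat \<Rightarrow> nat" where "strict_mono \<phi>" "\<And>i j. i < j \<Longrightarrow> le (g (\<phi> i)) (g (\<phi> j))"
proof -
  define col where "col i j =
    (if le (g i) (g j) then 0 else if le (g j) (g i) then 1 else 2::nat)" for i j
  have "\<forall>x\<in>UNIV. \<forall>y\<in>UNIV. x \<noteq> y \<longrightarrow> col (Min {x, y}) (Max {x, y}) < 3"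
    unfolding col_def by auto
  from Ramsey2[OF infinite_UNIV_nat this] obtain Y c where Y: "infinite Y" "c < 3"
    and hom: "\<forall>x\<in>Y. \<forall>y\<in>Y. x \<noteq> y \<longrightarrow> col (Min {x, y}) (Max {x, y}) = c"
    by blast
  have col_0: "le (g i) (g j)" if "col i j = 0" for i j
    using that unfolding col_def by (simp split: if_split_asm)
  have col_1: "le (g j) (g i) \<and> \<not> le (g i) (g j)" if "col i j = 1" for i j
    using that unfolding col_def by (simp split: if_split_asm)
  have col_2: "\<not> le (g i) (g j) \<and> \<not> le (g j) (g i)" if "col i j = 2" for i j
    using that unfolding col_def by (simp split: if_split_asm)
  define \<phi> where "\<phi> = enumerate Y"
  have \<phi>: "strict_mono \<phi>"
    unfolding \<phi>_def using strict_mono_enumerate[OF Y(1)] .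
  have colour_\<phi>: "col (\<phi> i) (\<phi> j) = c" if "i < j" for i j
  proof -
    have less: "\<phi> i < \<phi> j" using \<phi> that by (rule strict_monoD)
    have "\<phi> i \<in> Y" "\<phi> j \<in> Y"
      unfolding \<phi>_def using enumerate_in_set[OF Y(1)] by auto
    from hom[rule_format, OF this less_imp_neq[OF less]]
    have "col (Min {\<phi> i, \<phi> j}) (Max {\<phi> i, \<phi> j}) = c" .
    moreover have "Min {\<phi> i, \<phi> j} = \<phi> i" "Max {\<phi> i, \<phi> j} = \<phi> j"
      using less by auto
    ultimately show ?thesis by metis
  qed
  consider "c = 0" | "c = 1" | "c = 2" using Y(2) by linarith
  then show ?thesis
  proof cases
    case 1
    then show ?thesis using that[OF \<phi>] colour_\<phi> col_0 by blast
  next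
    case 2
    then have "le (g (\<phi> (Suc n))) (g (\<phi> n)) \<and> \<not> le (g (\<phi> n)) (g (\<phi> (Suc n)))" for n
      using colour_\<phi>[of n "Suc n"] col_1 by simp
    then have "\<not> wellfounded_on P le"
      unfolding wellfounded_on_def not_not using g by (intro exI[of _ "g \<circ> \<phi>"]) simp
    then show ?thesis using wqo unfolding wqo_on_def by blast
  next
    case 3
    then have incomparable: "\<not> le (g (\<phi> i)) (g (\<phi> j))" if "i \<noteq> j" for i j
      using that colour_\<phi> col_2 by (metis linorder_neqE_nat)
    have "le (g (\<phi> i)) (g (\<phi> i))" for i
      using wqo quasi_order_on_refl[OF _ g] unfolding wqo_on_def by blast
    then have "inj (g \<circ> \<phi>)"
      using incomparable by (intro injI) (metis comp_apply)
    then have "infinite (range (g \<circ> \<phi>))" by (rule range_inj_infinite)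
    moreover have "antichain_on le (range (g \<circ> \<phi>))"
      unfolding antichain_on_def
    proof (intro ballI impI)
      fix x y assume "x \<in> range (g \<circ> \<phi>)" "y \<in> range (g \<circ> \<phi>)" "x \<noteq> y"
      then obtain i j where x: "x = g (\<phi> i)" and y: "y = g (\<phi> j)"
        by (metis comp_apply rangeE)
      then have "i \<noteq> j" using \<open>x \<noteq> y\<close> by blast
      then show "\<not> le x y \<and> \<not> le y x"
        unfolding x y using incomparable[of i j] incomparable[of j i] by simp
    qed
    moreover have "range (g \<circ> \<phi>) \<subseteq> P" using g by auto
    ultimately show ?thesis using wqo unfolding wqo_on_def by blast
  qed
qed

definition down_closed :: "'a set \<Rightarrow> ('a \<Rightarrow> 'a \<Rightarrow> bool) \<Rightarrow> 'a set \<Rightarrow> bool" where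
  "down_closed P le D \<longleftrightarrow> D \<subseteq> P \<and> (\<forall>x\<in>D. \<forall>y\<in>P. le y x \<longrightarrow> y \<in> D)"

definition down_closure :: "'a set \<Rightarrow> ('a \<Rightarrow> 'a \<Rightarrow> bool) \<Rightarrow> 'a set \<Rightarrow> 'a set" where
  "down_closure P le A = {z \<in> P. \<exists>a\<in>A. le z a}"

lemma down_closedD: "down_closed P le D \<Longrightarrow> x \<in> D \<Longrightarrow> y \<in> P \<Longrightarrow> le y x \<Longrightarrow> y \<in> D"
  unfolding down_closed_def by blast

lemma down_closed_subset: "down_closed P le D \<Longrightarrow> D \<subseteq> P"
  unfolding down_closed_def by blast

lemma ideal_of_down_closed: "ideal_of P le I \<Longrightarrow> down_closed P le I"
  unfolding ideal_of_def down_closed_def by blast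

lemma down_closed_Union: "(\<And>D. D \<in> \<D> \<Longrightarrow> down_closed P le D) \<Longrightarrow> down_closed P le (\<Union>\<D>)"
  unfolding down_closed_def by blast

lemma down_closed_not_above:
  assumes "quasi_order_on P le" "down_closed P le D" "a \<in> P"
  shows "down_closed P le {z \<in> D. \<not> le a z}"
  using assms quasi_order_on_trans[OF assms(1)] unfolding down_closed_def by blast

lemma down_closed_down_closure:
  assumes "quasi_order_on P le" "A \<subseteq> P"
  shows "down_closed P le (down_closure P le A)"
  using assms quasi_order_on_trans[OF assms(1)] unfolding down_closed_def down_closure_def by blast

lemma down_closure_subset:
  assumes "down_closed P le D" "A \<subseteq> D"
  shows "down_closure P le A \<subseteq> D"
  using down_closedD[OF assms(1)] assms(2) unfolding down_closure_def by blast

lemma subset_down_closure: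
  assumes "quasi_order_on P le" "A \<subseteq> P"
  shows "A \<subseteq> down_closure P le A"
  using quasi_order_on_refl[OF assms(1)] assms(2) unfolding down_closure_def by blast

lemma ideal_of_down_closure_chain:
  fixes g :: "nat \<Rightarrow> 'a"
  assumes qo: "quasi_order_on P le" and g: "\<And>n. g n \<in> P" and mono: "\<And>i j. i \<le> j \<Longrightarrow> le (g i) (g j)"
  shows "ideal_of P le (down_closure P le (range g))"
proof -
  let ?I = "down_closure P le (range g)"
  have "range g \<subseteq> P" using g by blast
  then have closed: "down_closed P le ?I" and gI: "range g \<subseteq> ?I"
    using down_closed_down_closure[OF qo] subset_down_closure[OF qo] by blast+
  have below: "le x (g k)" if "x \<in> P" "le x (g i)" "i \<le> k" for x i k
    using quasi_order_on_trans[OF qo that(1) g g that(2) mono[OF that(3)]] .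
  have "\<exists>z\<in>?I. le x z \<and> le y z" if xy: "x \<in> ?I" "y \<in> ?I" for x y
  proof -
    obtain i j where x: "x \<in> P" "le x (g i)" and y: "y \<in> P" "le y (g j)"
      using xy unfolding down_closure_def by blast
    have "le x (g (max i j))" by (rule below[OF x]) simp
    moreover have "le y (g (max i j))" by (rule below[OF y]) simp
    ultimately show ?thesis using gI by blast
  qed
  then show ?thesis
    using closed gI unfolding ideal_of_def down_closed_def by blast
qed

lemma not_principal_down_closure_chain:
  fixes g :: "nat \<Rightarrow> 'a"
  assumes po: "poset_on P le" and g: "inj g" "\<And>n. g n \<in> P"
    and mono: "\<And>i j. i \<le> j \<Longrightarrow> le (g i) (g j)"
  shows "\<not> principal le (down_closure P le (range g))"
proof
  let ?I = "down_closure P le (range g)"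
  have qo: "quasi_order_on P le" using po by (rule poset_on_quasi_order_on)
  assume "principal le ?I"
  then obtain m where m: "m \<in> ?I" "\<forall>x\<in>?I. le x m" unfolding principal_def by blast
  then obtain i where "m \<in> P" "le m (g i)" unfolding down_closure_def by blast
  have "range g \<subseteq> P" using g(2) by blast
  then have "g (Suc i) \<in> ?I" using subset_down_closure[OF qo] by blast
  then have "le (g (Suc i)) m" using m(2) by blast
  then have "le (g (Suc i)) (g i)"
    using quasi_order_on_trans[OF qo g(2) \<open>m \<in> P\<close> g(2)] \<open>le m (g i)\<close> by blast
  then have "g (Suc i) = g i"
    using poset_on_antisym[OF po g(2) g(2)] mono[of i "Suc i"] by simp
  then show False using g(1) by (simp add: inj_eq)
qed

lemma wqo_on_nonprincipal_ideal_of_seq: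
  fixes g :: "nat \<Rightarrow> 'a"
  assumes po: "poset_on P le" and wqo: "wqo_on P le" and g: "inj g" "\<And>n. g n \<in> P"
  obtains \<phi> :: "nat \<Rightarrow> nat" where "down_closure P le (range (g \<circ> \<phi>)) \<in> nonprincipal_ideals P le"
proof -
  have qo: "quasi_order_on P le" using po by (rule poset_on_quasi_order_on)
  obtain \<phi> :: "nat \<Rightarrow> nat" where \<phi>: "strict_mono \<phi>"
    and incr: "\<And>i j. i < j \<Longrightarrow> le (g (\<phi> i)) (g (\<phi> j))"
    using wqo_on_increasing_subseq[where g = g, OF wqo g(2)] by blast
  have mono: "le ((g \<circ> \<phi>) i) ((g \<circ> \<phi>) j)" if "i \<le> j" for i j
  proof (cases "i = j")
    case True
    then show ?thesis using quasi_order_on_refl[OF qo g(2)] by simp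
  next
    case False
    then show ?thesis using incr that by simp
  qed
  have gP: "(g \<circ> \<phi>) n \<in> P" for n using g(2) by simp
  have "inj (g \<circ> \<phi>)"
    using g(1) strict_mono_imp_inj_on[OF \<phi>] by (rule inj_compose)
  then have "down_closure P le (range (g \<circ> \<phi>)) \<in> nonprincipal_ideals P le"
    using ideal_of_down_closure_chain[where g = "g \<circ> \<phi>", OF qo gP mono]
      not_principal_down_closure_chain[where g = "g \<circ> \<phi>", OF po _ gP mono]
    unfolding nonprincipal_ideals_def by blast
  then show ?thesis by (rule that)
qed

lemma wqo_on_finite_Diff_nonprincipal_ideals:
  assumes po: "poset_on P le" and wqo: "wqo_on P le" and D: "down_closed P le D"
  shows "finite (D - \<Union>{I \<in> nonprincipal_ideals P le. I \<subseteq> D})"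
proof (rule ccontr)
  let ?rest = "D - \<Union>{I \<in> nonprincipal_ideals P le. I \<subseteq> D}"
  assume "infinite ?rest"
  then obtain g :: "nat \<Rightarrow> 'a" where g: "inj g" "range g \<subseteq> ?rest"
    using infinite_countable_subset by blast
  have gP: "g n \<in> P" for n using g(2) down_closed_subset[OF D] by blast
  obtain \<phi> :: "nat \<Rightarrow> nat" where I: "down_closure P le (range (g \<circ> \<phi>)) \<in> nonprincipal_ideals P le"
    using wqo_on_nonprincipal_ideal_of_seq[where g = g, OF po wqo g(1) gP] .
  moreover have "range (g \<circ> \<phi>) \<subseteq> D" using g(2) by auto
  then have "down_closure P le (range (g \<circ> \<phi>)) \<subseteq> D"
    by (rule down_closure_subset[OF D])
  moreover have "g (\<phi> 0) \<in> down_closure P le (range (g \<circ> \<phi>))"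
    using subset_down_closure[OF poset_on_quasi_order_on[OF po], of "range (g \<circ> \<phi>)"] gP by auto
  ultimately have "g (\<phi> 0) \<notin> ?rest" by blast
  then show False using g(2) by blast
qed

lemma ideal_of_finite_upper_bound:
  assumes qo: "quasi_order_on P le" and D: "ideal_of P le D" and A: "finite A" "A \<subseteq> D"
  shows "\<exists>z\<in>D. \<forall>a\<in>A. le a z"
  using A
proof (induction A rule: finite_induct)
  case empty
  then show ?case using D unfolding ideal_of_def by blast
next
  case (insert a A)
  have DP: "D \<subseteq> P" using D unfolding ideal_of_def by blast
  obtain z where z: "z \<in> D" "\<forall>b\<in>A. le b z" using insert by blast
  obtain z' where z': "z' \<in> D" "le a z'" "le z z'"
    using D insert.prems z(1) unfolding ideal_of_def by blast
  have "le b z'" if "b \<in> A" for b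
  proof (rule quasi_order_on_trans[OF qo _ _ _ _ \<open>le z z'\<close>])
    show "b \<in> P" "z \<in> P" "z' \<in> P" using that insert.prems z(1) z'(1) DP by auto
    show "le b z" using z(2) that by blast
  qed
  then show ?case using z' by blast
qed

lemma ideal_of_neq_finite_Union:
  assumes qo: "quasi_order_on P le" and D: "ideal_of P le D" and "finite \<J>"
    and J: "\<And>I. I \<in> \<J> \<Longrightarrow> down_closed P le I \<and> I \<subset> D"
  shows "\<Union>\<J> \<noteq> D"
proof
  assume covered: "\<Union>\<J> = D"
  have "\<forall>I\<in>\<J>. \<exists>x. x \<in> D - I" using J by blast
  then obtain witness where witness: "\<forall>I\<in>\<J>. witness I \<in> D - I" by metis
  have W: "finite (witness ` \<J>)" "witness ` \<J> \<subseteq> D"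
    using \<open>finite \<J>\<close> witness by auto
  obtain z where z: "z \<in> D" "\<forall>a\<in>witness ` \<J>. le a z"
    using ideal_of_finite_upper_bound[OF qo D W] by blast
  then obtain I where I: "I \<in> \<J>" "z \<in> I" using covered by blast
  have "witness I \<in> P" using witness I(1) D unfolding ideal_of_def by blast
  then have "witness I \<in> I"
    using down_closedD[of P le I] J[OF I(1)] I(2) z(2) I(1) by simp
  then show False using witness I(1) by blast
qed

lemma down_closure_finite_neq_nonprincipal_ideal:
  assumes qo: "quasi_order_on P le" and D: "ideal_of P le D" "\<not> principal le D"
    and V: "finite V" "V \<subseteq> D"
  shows "down_closure P le V \<noteq> D"
proof
  assume eq: "down_closure P le V = D"
  obtain z where z: "z \<in> D" "\<forall>v\<in>V. le v z"
    using ideal_of_finite_upper_bound[OF qo D(1) V] by blast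
  have "le w z" if "w \<in> D" for w
    using that z V D(1) quasi_order_on_trans[OF qo]
    unfolding eq[symmetric] down_closure_def ideal_of_def
    by blast
  then show False using D(2) z(1) unfolding principal_def by blast
qed

section \<open>Barriers\<close>

lemma init_seg_linear:
  assumes "init_seg s Z" "init_seg t Z"
  shows "s \<subseteq> t \<or> t \<subseteq> s"
proof (rule ccontr)
  assume "\<not> (s \<subseteq> t \<or> t \<subseteq> s)"
  then obtain x y where xy: "x \<in> s" "x \<notin> t" "y \<in> t" "y \<notin> s" by blast
  then have "x \<in> Z" "y \<in> Z" using assms unfolding init_seg_def by auto
  consider "x < y" | "y < x" using xy by (metis linorder_neqE_nat)
  then show False
    using xy \<open>x \<in> Z\<close> \<open>y \<in> Z\<close> assms unfolding init_seg_def by cases blast+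
qed

lemma init_seg_Un:
  assumes "\<forall>a\<in>s. \<forall>w\<in>W. a < w"
  shows "init_seg s (s \<union> W)"
  using assms unfolding init_seg_def by (metis Un_iff Un_upper1 less_asym)

lemma Inf_in_init_seg:
  assumes "init_seg s Z" "s \<noteq> {}"
  shows "Inf Z \<in> s"
proof -
  obtain x where x: "x \<in> s" using assms(2) by blast
  then have "x \<in> Z" using assms(1) unfolding init_seg_def by blast
  then have "Inf Z \<in> Z" "Inf Z \<le> x" using Inf_nat_def1 wellorder_Inf_le1 by blast+
  then show ?thesis
    using x assms(1) unfolding init_seg_def by (metis le_neq_implies_less)
qed

lemma init_seg_insert_Inf:
  assumes "Z \<noteq> {}" "init_seg u (Z - {Inf Z})"
  shows "init_seg (insert (Inf Z) u) Z"
  unfolding init_seg_def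
proof (intro conjI ballI impI)
  have "Inf Z \<in> Z" using assms(1) by (rule Inf_nat_def1)
  then show "insert (Inf Z) u \<subseteq> Z" using assms(2) unfolding init_seg_def by blast
  fix x y assume x: "x \<in> insert (Inf Z) u" and y: "y \<in> Z" "y < x"
  have "Inf Z \<le> y" using y(1) by (rule wellorder_Inf_le1)
  show "y \<in> insert (Inf Z) u"
  proof (cases "y = Inf Z")
    case False
    then have "x \<in> u" "y \<in> Z - {Inf Z}" using x y \<open>Inf Z \<le> y\<close> by auto
    then show ?thesis using y(2) assms(2) unfolding init_seg_def by blast
  qed simp
qed

definition beyond :: "nat set \<Rightarrow> nat set \<Rightarrow> nat set" where
  "beyond N s = {n \<in> N. \<forall>x\<in>s. x < n}"

lemma beyond_subset: "beyond N s \<subseteq> N"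
  unfolding beyond_def by blast

lemma beyond_empty [simp]: "beyond N {} = N"
  unfolding beyond_def by simp

lemma beyond_insert: "beyond N (insert n s) = beyond (beyond N s) {n}"
  unfolding beyond_def by auto

lemma infinite_beyond:
  assumes "infinite N" "finite s"
  shows "infinite (beyond N s)"
proof -
  have "beyond N s = N - (\<Union>x\<in>s. {..x})" unfolding beyond_def by (auto simp: not_le)
  then show ?thesis using assms by (simp add: Diff_infinite_finite)
qed

lemma init_seg_Un_beyond: "init_seg s (s \<union> beyond N s)"
  by (rule init_seg_Un) (simp add: beyond_def)

lemma
  assumes "barrier B"
  shows barrier_infinite: "infinite B"
    and barrier_finite: "s \<in> B \<Longrightarrow> finite s"
    and barrier_not_psubset: "s \<in> B \<Longrightarrow> t \<in> B \<Longrightarrow> \<not> s \<subset> t"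
    and barrier_init_seg_ex: "Z \<subseteq> \<Union>B \<Longrightarrow> infinite Z \<Longrightarrow> \<exists>s\<in>B. init_seg s Z"
  using assms unfolding barrier_def by blast+

lemma barrier_nonempty:
  assumes "barrier B" "s \<in> B"
  shows "s \<noteq> {}"
proof
  assume "s = {}"
  have "\<not> B \<subseteq> {{}}" using barrier_infinite[OF assms(1)] finite_subset by blast
  then obtain t where "t \<in> B" "t \<noteq> {}" by blast
  then show False using barrier_not_psubset[OF assms(1,2) \<open>t \<in> B\<close>] \<open>s = {}\<close> by blast
qed

lemma barrier_infinite_Union:
  assumes "barrier B"
  shows "infinite (\<Union>B)"
  using barrier_infinite[OF assms] finite_UnionD by blast

lemma barrier_init_seg_unique:
  assumes "barrier B" "s \<in> B" "t \<in> B" "init_seg s Z" "init_seg t Z"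
  shows "s = t"
  using init_seg_linear[OF assms(4,5)] barrier_not_psubset[OF assms(1)] assms(2,3) by blast

text \<open>Only meaningful for infinite Z \<subseteq> \<Union>B, where exactly one member of B is an initial
  segment of Z.\<close>
definition barrier_prefix :: "nat set set \<Rightarrow> nat set \<Rightarrow> nat set" where
  "barrier_prefix B Z = (THE s. s \<in> B \<and> init_seg s Z)"

lemma barrier_prefix_eq:
  assumes "barrier B" "s \<in> B" "init_seg s Z"
  shows "barrier_prefix B Z = s"
  unfolding barrier_prefix_def
  using assms barrier_init_seg_unique[OF assms(1)] by (intro the_equality) blast+

lemma
  assumes "barrier B" "Z \<subseteq> \<Union>B" "infinite Z"
  shows barrier_prefix_in: "barrier_prefix B Z \<in> B"
    and init_seg_barrier_prefix: "init_seg (barrier_prefix B Z) Z"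
  using barrier_init_seg_ex[OF assms] barrier_prefix_eq[OF assms(1)] by metis+

lemma tri_barrier_prefix:
  assumes B: "barrier B" and Z: "Z \<subseteq> \<Union>B" "infinite Z"
  shows "tri (barrier_prefix B Z) (barrier_prefix B (Z - {Inf Z}))"
proof -
  define m where "m = Inf Z"
  define s where "s = barrier_prefix B Z"
  define t where "t = barrier_prefix B (Z - {m})"
  have Z': "Z - {m} \<subseteq> \<Union>B" "infinite (Z - {m})" using Z by auto
  have s: "s \<in> B" "init_seg s Z"
    unfolding s_def using barrier_prefix_in[OF B Z] init_seg_barrier_prefix[OF B Z] by auto
  have t: "t \<in> B" "init_seg t (Z - {m})"
    unfolding t_def using barrier_prefix_in[OF B Z'] init_seg_barrier_prefix[OF B Z'] by auto
  have "Z \<noteq> {}" using Z(2) by auto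
  define r where "r = insert m t"
  have r: "init_seg r Z" "finite r"
    unfolding r_def m_def using init_seg_insert_Inf[OF \<open>Z \<noteq> {}\<close>] t barrier_finite[OF B]
    by (auto simp: m_def)
  have "m \<in> s" unfolding m_def using Inf_in_init_seg[OF s(2) barrier_nonempty[OF B s(1)]] .
  moreover have "m \<notin> t" using t(2) unfolding init_seg_def by blast
  ultimately have "\<not> r \<subseteq> s"
    using barrier_not_psubset[OF B t(1) s(1)] unfolding r_def by blast
  then have "s \<subset> r" using init_seg_linear[OF s(2) r(1)] by blast
  moreover have "init_seg s r" using \<open>s \<subset> r\<close> s(2) r(1) unfolding init_seg_def by blast
  moreover have "Min r = m"
    using r wellorder_Inf_le1[of _ Z] unfolding r_def init_seg_def
    by (intro Min_eqI) (auto simp: m_def)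
  moreover have "t = r - {m}" unfolding r_def using \<open>m \<notin> t\<close> by blast
  ultimately show ?thesis
    unfolding tri_def s_def[symmetric] t_def[symmetric] m_def[symmetric] using r(2) by blast
qed

lemma barrier_ex_tri:
  assumes "barrier B"
  shows "\<exists>s\<in>B. \<exists>t\<in>B. tri s t"
proof -
  have U: "\<Union>B \<subseteq> \<Union>B" "infinite (\<Union>B)" using barrier_infinite_Union[OF assms] by auto
  then have U': "\<Union>B - {Inf (\<Union>B)} \<subseteq> \<Union>B" "infinite (\<Union>B - {Inf (\<Union>B)})" by auto
  show ?thesis
    using tri_barrier_prefix[OF assms U] barrier_prefix_in[OF assms U]
      barrier_prefix_in[OF assms U']
    by blast
qed

lemma barrier_restrict:
  assumes B: "barrier B" and Y: "Y \<subseteq> \<Union>B" "infinite Y"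
  shows "barrier {s \<in> B. s \<subseteq> Y}"
proof -
  let ?B = "{s \<in> B. s \<subseteq> Y}"
  have "infinite ?B"
  proof
    assume "finite ?B"
    then have "finite (\<Union>?B)" using barrier_finite[OF B] by auto
    then have X: "Y - \<Union>?B \<subseteq> \<Union>B" "infinite (Y - \<Union>?B)" using Y by auto
    obtain s where "s \<in> B" "init_seg s (Y - \<Union>?B)"
      using barrier_init_seg_ex[OF B X] by blast
    then show False
      using barrier_nonempty[OF B \<open>s \<in> B\<close>] unfolding init_seg_def by blast
  qed
  moreover have "\<exists>s\<in>?B. s \<noteq> {} \<and> init_seg s X" if X: "X \<subseteq> \<Union>?B" "infinite X" for X
  proof -
    obtain s where s: "s \<in> B" "init_seg s X"
      using barrier_init_seg_ex[OF B _ X(2)] X(1) by blast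
    then have "s \<subseteq> Y" using X(1) unfolding init_seg_def by blast
    then show ?thesis using s barrier_nonempty[OF B s(1)] by blast
  qed
  ultimately show ?thesis
    using barrier_finite[OF B] barrier_not_psubset[OF B] unfolding barrier_def by blast
qed

section \<open>Nash-Williams' partition theorem\<close>

text \<open>The accept/reject terminology of Galvin and Prikry's proof of Nash-Williams' theorem.\<close>
definition accepts :: "nat set set \<Rightarrow> nat set \<Rightarrow> nat set \<Rightarrow> bool" where
  "accepts F N s \<longleftrightarrow> (\<forall>Z\<subseteq>N. infinite Z \<longrightarrow> (\<exists>u. finite u \<and> init_seg u Z \<and> s \<union> u \<in> F))"

definition rejects :: "nat set set \<Rightarrow> nat set \<Rightarrow> nat set \<Rightarrow> bool" where
  "rejects F N s \<longleftrightarrow> (\<forall>N'\<subseteq>N. infinite N' \<longrightarrow> \<not> accepts F N' s)"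

definition decides :: "nat set set \<Rightarrow> nat set \<Rightarrow> nat set \<Rightarrow> bool" where
  "decides F N s \<longleftrightarrow> accepts F N s \<or> rejects F N s"

lemma accepts_subset: "N' \<subseteq> N \<Longrightarrow> accepts F N s \<Longrightarrow> accepts F N' s"
  unfolding accepts_def by (meson order_trans)

lemma rejects_subset: "N' \<subseteq> N \<Longrightarrow> rejects F N s \<Longrightarrow> rejects F N' s"
  unfolding rejects_def by (meson order_trans)

lemma decides_subset: "N' \<subseteq> N \<Longrightarrow> decides F N s \<Longrightarrow> decides F N' s"
  unfolding decides_def using accepts_subset rejects_subset by blast

lemma ex_decides: "infinite N \<Longrightarrow> \<exists>N'\<subseteq>N. infinite N' \<and> decides F N' s"
  unfolding decides_def rejects_def by blast

lemma ex_infinite_subset_all: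
  assumes mono: "\<And>s N N'. N' \<subseteq> N \<Longrightarrow> \<Phi> s N \<Longrightarrow> \<Phi> s N'"
    and ex: "\<And>s N. infinite N \<Longrightarrow> \<exists>N'\<subseteq>N. infinite N' \<and> \<Phi> s N'"
    and "finite S" "infinite N"
  shows "\<exists>N'\<subseteq>N. infinite N' \<and> (\<forall>s\<in>S. \<Phi> s N')"
  using \<open>finite S\<close>
proof (induction S rule: finite_induct)
  case empty
  show ?case using \<open>infinite N\<close> by blast
next
  case (insert s S)
  then obtain N1 where "N1 \<subseteq> N" "infinite N1" "\<forall>s'\<in>S. \<Phi> s' N1" by blast
  moreover obtain N2 where "N2 \<subseteq> N1" "infinite N2" "\<Phi> s N2" using ex[OF \<open>infinite N1\<close>] by blast
  ultimately show ?case using mono by blast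
qed

lemma fusion_sequence:
  assumes M: "infinite M"
    and mono: "\<And>s N N'. N' \<subseteq> N \<Longrightarrow> \<Phi> s N \<Longrightarrow> \<Phi> s N'"
    and ex: "\<And>s N. infinite N \<Longrightarrow> \<exists>N'\<subseteq>N. infinite N' \<and> \<Phi> s N'"
  shows "\<exists>R :: nat \<Rightarrow> nat set. \<forall>k. (infinite (R k) \<and> R k \<subseteq> M) \<and>
      R (Suc k) \<subseteq> beyond (R k) {Inf (R k)} \<and> (\<forall>s. s \<subseteq> {..Inf (R k)} \<longrightarrow> \<Phi> s (R (Suc k)))"
proof -
  have "\<exists>R'. (infinite R' \<and> R' \<subseteq> M) \<and>
      R' \<subseteq> beyond R {Inf R} \<and> (\<forall>s. s \<subseteq> {..Inf R} \<longrightarrow> \<Phi> s R')"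
    if "infinite R \<and> R \<subseteq> M" for R
  proof -
    have "\<exists>R'\<subseteq>beyond R {Inf R}. infinite R' \<and> (\<forall>s\<in>Pow {..Inf R}. \<Phi> s R')"
      by (rule ex_infinite_subset_all) (fact mono ex | use that in \<open>simp add: infinite_beyond\<close>)+
    then obtain R' where "R' \<subseteq> beyond R {Inf R}" "infinite R'" "\<forall>s\<in>Pow {..Inf R}. \<Phi> s R'"
      by blast
    moreover have "R' \<subseteq> M" using calculation(1) beyond_subset[of R] that by blast
    ultimately show ?thesis by (intro exI[of _ R']) auto
  qed
  then show ?thesis
    using M by (intro dependent_nat_choice[where P = "\<lambda>_ R. infinite R \<and> R \<subseteq> M"
        and Q = "\<lambda>_ R R'. R' \<subseteq> beyond R {Inf R} \<and> (\<forall>s. s \<subseteq> {..Inf R} \<longrightarrow> \<Phi> s R')"]) auto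
qed

text \<open>N picks its k-th element from the k-th set of a fusion sequence, so the part of N
  beyond s lies in a set that was chosen after all subsets of s had been taken care of.\<close>
lemma diagonal_fusion:
  assumes M: "infinite M"
    and mono: "\<And>s N N'. N' \<subseteq> N \<Longrightarrow> \<Phi> s N \<Longrightarrow> \<Phi> s N'"
    and ex: "\<And>s N. infinite N \<Longrightarrow> \<exists>N'\<subseteq>N. infinite N' \<and> \<Phi> s N'"
  shows "\<exists>N\<subseteq>M. infinite N \<and> (\<forall>s. finite s \<longrightarrow> s \<subseteq> N \<longrightarrow> \<Phi> s (beyond N s))"
proof -
  have "\<exists>R :: nat \<Rightarrow> nat set. \<forall>k. (infinite (R k) \<and> R k \<subseteq> M) \<and>
      R (Suc k) \<subseteq> beyond (R k) {Inf (R k)} \<and> (\<forall>s. s \<subseteq> {..Inf (R k)} \<longrightarrow> \<Phi> s (R (Suc k)))"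
    by (rule fusion_sequence) (fact M mono ex)+
  then obtain R where R_inf: "\<And>k. infinite (R k)" and R_M: "\<And>k. R k \<subseteq> M"
    and R_beyond: "\<And>k. R (Suc k) \<subseteq> beyond (R k) {Inf (R k)}"
    and R_\<Phi>: "\<And>k s. s \<subseteq> {..Inf (R k)} \<Longrightarrow> \<Phi> s (R (Suc k))"
    by blast
  have R_anti: "R j \<subseteq> R i" if "i \<le> j" for i j
    using lift_Suc_antimono_le[of R, OF _ that] R_beyond beyond_subset by blast
  define a where "a k = Inf (R (Suc k))" for k
  have a_in: "a k \<in> R (Suc k)" for k
    unfolding a_def using R_inf Inf_nat_def1 by (metis finite.emptyI)
  have "a k < a (Suc k)" for k
    using a_in[of "Suc k"] R_beyond[of "Suc k"] unfolding a_def beyond_def by auto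
  then have a: "strict_mono a" by (simp add: strict_mono_Suc_iff)
  define N where "N = range a"
  have "N \<subseteq> M" unfolding N_def using a_in R_M by blast
  moreover have "infinite N"
    unfolding N_def using a by (simp add: range_inj_infinite strict_mono_imp_inj_on)
  moreover have "\<Phi> s (beyond N s)" if s: "finite s" "s \<subseteq> N" for s
  proof -
    have key: "\<Phi> s (beyond N s)" if "s \<subseteq> {..Inf (R k)}" "beyond N s \<subseteq> R (Suc k)" for k
      using mono[OF that(2) R_\<Phi>[OF that(1)]] .
    have tail: "beyond N s \<subseteq> R (Suc k)" if k: "\<forall>j. a j \<in> beyond N s \<longrightarrow> k \<le> j" for k
    proof
      fix n assume n: "n \<in> beyond N s"
      then obtain j where "n = a j" using beyond_subset unfolding N_def by blast
      then show "n \<in> R (Suc k)" using k n a_in[of j] R_anti[of "Suc k" "Suc j"] by auto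
    qed
    show ?thesis
    proof (cases "s = {}")
      case True
      then show ?thesis using key[of 0] tail[of 0] by simp
    next
      case False
      then obtain i where i: "Max s = a i" using s Max_in unfolding N_def by blast
      have "s \<subseteq> {..Inf (R (Suc i))}" using s(1) i Max_ge unfolding a_def by fastforce
      moreover have "Suc i \<le> j" if "a j \<in> beyond N s" for j
        using that i Max_in[OF s(1) False] strict_mono_less[OF a] unfolding beyond_def by auto
      ultimately show ?thesis using key tail by blast
    qed
  qed
  ultimately show ?thesis by blast
qed

lemma fusion_thinning:
  assumes M: "infinite M" and "G {}"
    and ext: "\<And>s. finite s \<Longrightarrow> s \<subseteq> M \<Longrightarrow> G s \<Longrightarrow> finite {n \<in> beyond M s. \<not> G (insert n s)}"
  shows "\<exists>N\<subseteq>M. infinite N \<and> (\<forall>s. finite s \<longrightarrow> s \<subseteq> N \<longrightarrow> G s)"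
proof -
  define \<Phi> where "\<Phi> s R \<longleftrightarrow> (finite s \<and> s \<subseteq> M \<and> G s \<longrightarrow> (\<forall>n\<in>R \<inter> beyond M s. G (insert n s)))"
    for s R
  have mono: "\<Phi> s R'" if "R' \<subseteq> R" "\<Phi> s R" for s R R'
    using that unfolding \<Phi>_def by blast
  have ex: "\<exists>R'\<subseteq>R. infinite R' \<and> \<Phi> s R'" if "infinite R" for s R
  proof (cases "finite s \<and> s \<subseteq> M \<and> G s")
    case True
    let ?R' = "R - {n \<in> beyond M s. \<not> G (insert n s)}"
    have "infinite ?R'" using that ext True by (simp add: Diff_infinite_finite)
    moreover have "\<Phi> s ?R'" unfolding \<Phi>_def by blast
    ultimately show ?thesis by blast
  next
    case False
    then show ?thesis using that unfolding \<Phi>_def by blast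
  qed
  have "\<exists>N\<subseteq>M. infinite N \<and> (\<forall>s. finite s \<longrightarrow> s \<subseteq> N \<longrightarrow> \<Phi> s (beyond N s))"
    by (rule diagonal_fusion) (fact M mono ex)+
  then obtain N where N: "N \<subseteq> M" "infinite N"
    and fused: "\<forall>s. finite s \<longrightarrow> s \<subseteq> N \<longrightarrow> \<Phi> s (beyond N s)"
    by blast
  have "G s" if "finite s" "s \<subseteq> N" for s
    using that
  proof (induction s rule: finite_linorder_max_induct)
    case empty
    show ?case by (rule \<open>G {}\<close>)
  next
    case (insert b A)
    then have "A \<subseteq> N" "G A" by auto
    moreover have "b \<in> beyond N A" "b \<in> beyond M A"
      using insert.hyps(2) insert.prems N(1) unfolding beyond_def by auto
    ultimately show ?case
      using fused insert.hyps(1) N(1) unfolding \<Phi>_def by blast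
  qed
  then show ?thesis using N by blast
qed

lemma rejects_finite_accepting_extensions:
  assumes "rejects F N s"
  shows "finite {n \<in> N. accepts F (beyond N {n}) (insert n s)}"
proof (rule ccontr)
  let ?G = "{n \<in> N. accepts F (beyond N {n}) (insert n s)}"
  assume "infinite ?G"
  have "accepts F ?G s"
    unfolding accepts_def[of F ?G]
  proof (intro allI impI)
    fix Z assume Z: "Z \<subseteq> ?G" "infinite Z"
    define n where "n = Inf Z"
    have "Z \<noteq> {}" using Z(2) by auto
    then have "n \<in> Z" unfolding n_def by (rule Inf_nat_def1)
    have "Z - {n} \<subseteq> beyond N {n}"
      using Z(1) wellorder_Inf_le1[of _ Z] unfolding n_def beyond_def by fastforce
    moreover have "infinite (Z - {n})" using Z(2) by simp
    moreover have "accepts F (beyond N {n}) (insert n s)" using \<open>n \<in> Z\<close> Z(1) by blast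
    ultimately obtain u where u: "finite u" "init_seg u (Z - {n})" "insert n s \<union> u \<in> F"
      unfolding accepts_def by blast
    then have "init_seg (insert n u) Z"
      using init_seg_insert_Inf[OF \<open>Z \<noteq> {}\<close>] unfolding n_def by blast
    moreover have "s \<union> insert n u = insert n s \<union> u" by blast
    ultimately show "\<exists>u. finite u \<and> init_seg u Z \<and> s \<union> u \<in> F" using u by (metis finite_insert)
  qed
  moreover have "?G \<subseteq> N" by blast
  ultimately show False using assms \<open>infinite ?G\<close> unfolding rejects_def by simp
qed

theorem nash_williams:
  assumes "infinite M"
  shows "\<exists>N\<subseteq>M. infinite N \<and> ((\<forall>s. finite s \<longrightarrow> s \<subseteq> N \<longrightarrow> s \<notin> F) \<or> accepts F N {})"
proof -
  obtain N0 where N0: "N0 \<subseteq> M" "infinite N0"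
    and dec: "\<And>s. finite s \<Longrightarrow> s \<subseteq> N0 \<Longrightarrow> decides F (beyond N0 s) s"
  proof -
    have "\<exists>N0\<subseteq>M. infinite N0 \<and> (\<forall>s. finite s \<longrightarrow> s \<subseteq> N0 \<longrightarrow> decides F (beyond N0 s) s)"
      by (rule diagonal_fusion[where \<Phi> = "\<lambda>s N. decides F N s"])
        (use assms decides_subset ex_decides in blast)+
    then show ?thesis using that by blast
  qed
  have "decides F N0 {}" using dec[of "{}"] by simp
  then consider "accepts F N0 {}" | "rejects F N0 {}" unfolding decides_def by blast
  then show ?thesis
  proof cases
    case 1
    then show ?thesis using N0 by blast
  next
    case 2
    have "\<exists>N\<subseteq>N0. infinite N \<and> (\<forall>s. finite s \<longrightarrow> s \<subseteq> N \<longrightarrow> rejects F (beyond N0 s) s)"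
    proof (rule fusion_thinning[OF N0(2)])
      show "rejects F (beyond N0 {}) {}" using 2 by simp
      fix s assume s: "finite s" "s \<subseteq> N0" "rejects F (beyond N0 s) s"
      have "{n \<in> beyond N0 s. \<not> rejects F (beyond N0 (insert n s)) (insert n s)}
          \<subseteq> {n \<in> beyond N0 s. accepts F (beyond (beyond N0 s) {n}) (insert n s)}"
      proof (intro subsetI CollectI conjI; elim CollectE conjE)
        fix n assume n: "n \<in> beyond N0 s" "\<not> rejects F (beyond N0 (insert n s)) (insert n s)"
        then have "insert n s \<subseteq> N0" using s(2) beyond_subset by blast
        then have "decides F (beyond N0 (insert n s)) (insert n s)"
          using dec s(1) by simp
        then show "accepts F (beyond (beyond N0 s) {n}) (insert n s)"
          using n(2) unfolding decides_def beyond_insert[of N0 n s] by blast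
      qed
      then show "finite {n \<in> beyond N0 s. \<not> rejects F (beyond N0 (insert n s)) (insert n s)}"
        using rejects_finite_accepting_extensions[OF s(3)] finite_subset by blast
    qed
    then obtain N where N: "N \<subseteq> N0" "infinite N"
      and rej: "\<And>s. finite s \<Longrightarrow> s \<subseteq> N \<Longrightarrow> rejects F (beyond N0 s) s" by blast
    have "s \<notin> F" if "finite s" "s \<subseteq> N" for s
    proof
      assume "s \<in> F"
      then have "accepts F (beyond N0 s) s"
        unfolding accepts_def init_seg_def by (intro allI impI exI[of _ "{}"]) auto
      moreover have "infinite (beyond N0 s)" using infinite_beyond[OF N0(2) that(1)] .
      ultimately show False using rej[OF that] unfolding rejects_def by blast
    qed
    then show ?thesis using N N0(1) by blast
  qed
qed

lemma barrier_partition: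
  assumes B: "barrier B"
  obtains Y where "Y \<subseteq> \<Union>B" "infinite Y" "(\<forall>s\<in>B. s \<subseteq> Y \<longrightarrow> Q s) \<or> (\<forall>s\<in>B. s \<subseteq> Y \<longrightarrow> \<not> Q s)"
proof -
  obtain N where N: "N \<subseteq> \<Union>B" "infinite N"
    and alt: "(\<forall>s. finite s \<longrightarrow> s \<subseteq> N \<longrightarrow> s \<notin> {s \<in> B. Q s}) \<or> accepts {s \<in> B. Q s} N {}"
    using nash_williams[OF barrier_infinite_Union[OF B]] by blast
  have all_Q: "\<forall>s\<in>B. s \<subseteq> N \<longrightarrow> Q s" if acc: "accepts {s \<in> B. Q s} N {}"
  proof (intro ballI impI)
    fix t assume t: "t \<in> B" "t \<subseteq> N"
    let ?Z = "t \<union> beyond N t"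
    have "?Z \<subseteq> N" using t(2) beyond_subset by blast
    moreover have "infinite ?Z" using infinite_beyond[OF N(2) barrier_finite[OF B t(1)]] by simp
    ultimately have "\<exists>u. finite u \<and> init_seg u ?Z \<and> {} \<union> u \<in> {s \<in> B. Q s}"
      using acc unfolding accepts_def by blast
    then obtain u where u: "init_seg u ?Z" "u \<in> B" "Q u" by auto
    moreover have "u = t"
      using barrier_init_seg_unique[OF B u(2) t(1) u(1) init_seg_Un_beyond] .
    ultimately show "Q t" by simp
  qed
  have no_Q: "\<forall>s\<in>B. s \<subseteq> N \<longrightarrow> \<not> Q s" if "\<forall>s. finite s \<longrightarrow> s \<subseteq> N \<longrightarrow> s \<notin> {s \<in> B. Q s}"
    using that barrier_finite[OF B] by blast
  show ?thesis using that[OF N] all_Q no_Q alt by blast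
qed

section \<open>Bad maps into down-closed sets\<close>

definition has_bad_map :: "('a \<Rightarrow> 'a \<Rightarrow> bool) \<Rightarrow> 'a set \<Rightarrow> bool" where
  "has_bad_map le D \<longleftrightarrow> (\<exists>B f. barrier B \<and> f ` B \<subseteq> D \<and> \<not> good_map le B f)"

lemma has_bad_map_mono: "D \<subseteq> D' \<Longrightarrow> has_bad_map le D \<Longrightarrow> has_bad_map le D'"
  unfolding has_bad_map_def by blast

lemma has_bad_map_nonempty: "has_bad_map le D \<Longrightarrow> D \<noteq> {}"
  unfolding has_bad_map_def using barrier_infinite by fastforce

lemma has_bad_map_restrict:
  assumes B: "barrier B" and bad: "\<not> good_map le B f" and Y: "Y \<subseteq> \<Union>B" "infinite Y"
    and D: "\<And>s. s \<in> B \<Longrightarrow> s \<subseteq> Y \<Longrightarrow> f s \<in> D"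
  shows "has_bad_map le D"
proof -
  have "\<not> good_map le {s \<in> B. s \<subseteq> Y} f" using bad unfolding good_map_def by blast
  moreover have "f ` {s \<in> B. s \<subseteq> Y} \<subseteq> D" using D by blast
  ultimately show ?thesis
    unfolding has_bad_map_def using barrier_restrict[OF B Y] by blast
qed

lemma has_bad_map_Un:
  assumes "has_bad_map le (D1 \<union> D2)"
  shows "has_bad_map le D1 \<or> has_bad_map le D2"
proof -
  obtain B f where B: "barrier B" "f ` B \<subseteq> D1 \<union> D2" "\<not> good_map le B f"
    using assms unfolding has_bad_map_def by blast
  obtain Y where Y: "Y \<subseteq> \<Union>B" "infinite Y"
    and alt: "(\<forall>s\<in>B. s \<subseteq> Y \<longrightarrow> f s \<in> D1) \<or> (\<forall>s\<in>B. s \<subseteq> Y \<longrightarrow> f s \<notin> D1)"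
    by (rule barrier_partition[OF B(1)])
  then show ?thesis using has_bad_map_restrict[OF B(1) B(3) Y] B(2) by blast
qed

lemma not_has_bad_map_singleton:
  assumes "le m m"
  shows "\<not> has_bad_map le {m}"
proof
  assume "has_bad_map le {m}"
  then obtain B f where B: "barrier B" "f ` B \<subseteq> {m}" "\<not> good_map le B f"
    unfolding has_bad_map_def by blast
  obtain s t where st: "s \<in> B" "t \<in> B" "tri s t" using barrier_ex_tri[OF B(1)] by blast
  then have "f s = m" "f t = m" using B(2) by blast+
  then have "le (f s) (f t)" using assms by simp
  then show False using B(3) st unfolding good_map_def by blast
qed

lemma finite_relpow_Image:
  fixes R :: "('a \<times> 'a) set"
  assumes "\<And>x. finite (R `` {x})"
  shows "finite ((R ^^ n) `` {x})"
proof (induction n)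
  case (Suc n)
  have "(R ^^ Suc n) `` {x} = R `` ((R ^^ n) `` {x})" by (simp add: relcomp_Image)
  also have "\<dots> = (\<Union>y\<in>(R ^^ n) `` {x}. R `` {y})" by (rule Image_eq_UN)
  finally show ?case using Suc assms by simp
qed simp

text \<open>Peeling off the elements of a, one \<open>\<triangleleft>\<close>-step at a time.\<close>
lemma barrier_prefix_relpow:
  assumes B: "barrier B" and step: "\<And>s t. s \<in> B \<Longrightarrow> t \<in> B \<Longrightarrow> tri s t \<Longrightarrow> (f s, f t) \<in> R"
    and "finite a" "infinite W" "a \<union> W \<subseteq> \<Union>B" "\<forall>x\<in>a. \<forall>w\<in>W. x < w"
  shows "(f (barrier_prefix B (a \<union> W)), f (barrier_prefix B W)) \<in> R ^^ card a"
  using assms(3-)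
proof (induction "card a" arbitrary: a)
  case 0
  then show ?case by simp
next
  case (Suc n)
  then have "a \<noteq> {}" by auto
  define m where "m = Min a"
  have m: "m \<in> a" "\<And>x. x \<in> a \<Longrightarrow> m \<le> x"
    unfolding m_def using Suc.prems(1) \<open>a \<noteq> {}\<close> by auto
  have "m \<le> x" if "x \<in> a \<union> W" for x
    using that m Suc.prems(4) by (auto intro: less_imp_le)
  then have Inf: "Inf (a \<union> W) = m" using m(1) by (intro cInf_eq_minimum) auto
  have peel: "a \<union> W - {Inf (a \<union> W)} = (a - {m}) \<union> W"
    unfolding Inf using m(1) Suc.prems(4) by auto
  have "n = card (a - {m})" using Suc.hyps(2) Suc.prems(1) m(1) by simp
  moreover have "finite (a - {m})" and sub: "(a - {m}) \<union> W \<subseteq> \<Union>B"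
    and "\<forall>x\<in>a - {m}. \<forall>w\<in>W. x < w"
    using Suc.prems by auto
  ultimately have "(f (barrier_prefix B ((a - {m}) \<union> W)), f (barrier_prefix B W)) \<in> R ^^ n"
    using Suc.hyps(1) Suc.prems(2) by blast
  moreover have "(f (barrier_prefix B (a \<union> W)), f (barrier_prefix B ((a - {m}) \<union> W))) \<in> R"
  proof (rule step)
    have inf: "infinite (a \<union> W)" using Suc.prems(2) by simp
    show "barrier_prefix B (a \<union> W) \<in> B" by (rule barrier_prefix_in[OF B Suc.prems(3) inf])
    show "barrier_prefix B ((a - {m}) \<union> W) \<in> B"
      using barrier_prefix_in[OF B sub] Suc.prems(2) by simp
    show "tri (barrier_prefix B (a \<union> W)) (barrier_prefix B ((a - {m}) \<union> W))"
      using tri_barrier_prefix[OF B Suc.prems(3) inf] unfolding peel .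
  qed
  ultimately show ?case using relpow_Suc_I2 by (metis Suc.hyps(2))
qed

text \<open>Every value on the sub-barrier beyond s0 is reached from f s0 in card s0 steps of R,
  so there are only finitely many of them.\<close>
lemma barrier_finite_image_restrict:
  assumes B: "barrier B" and step: "\<And>s t. s \<in> B \<Longrightarrow> t \<in> B \<Longrightarrow> tri s t \<Longrightarrow> (f s, f t) \<in> R"
    and fin: "\<And>x. finite (R `` {x})"
  obtains Y where "Y \<subseteq> \<Union>B" "infinite Y" "finite (f ` {t \<in> B. t \<subseteq> Y})"
proof -
  obtain s0 where s0: "s0 \<in> B" using barrier_infinite[OF B] by (metis ex_in_conv finite.emptyI)
  define Y where "Y = beyond (\<Union>B) s0"
  have Y: "Y \<subseteq> \<Union>B" "infinite Y"
    unfolding Y_def using beyond_subset infinite_beyond barrier_infinite_Union[OF B]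
      barrier_finite[OF B s0] by auto
  have "f t \<in> (R ^^ card s0) `` {f s0}" if t: "t \<in> B" "t \<subseteq> Y" for t
  proof -
    define W where "W = t \<union> beyond Y t"
    have W: "infinite W" "W \<subseteq> Y"
      unfolding W_def using infinite_beyond[OF Y(2) barrier_finite[OF B t(1)]] t(2) beyond_subset
      by auto
    have "barrier_prefix B W = t"
      unfolding W_def by (rule barrier_prefix_eq[OF B t(1) init_seg_Un_beyond])
    moreover have below: "\<forall>x\<in>s0. \<forall>w\<in>W. x < w" using W(2) unfolding Y_def beyond_def by blast
    then have "barrier_prefix B (s0 \<union> W) = s0"
      by (rule barrier_prefix_eq[OF B s0 init_seg_Un])
    moreover have "s0 \<union> W \<subseteq> \<Union>B" using s0 W(2) Y(1) by blast
    ultimately show ?thesis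
      using barrier_prefix_relpow[OF B step barrier_finite[OF B s0] W(1) _ below] by simp
  qed
  then have "f ` {t \<in> B. t \<subseteq> Y} \<subseteq> (R ^^ card s0) `` {f s0}" by blast
  then show ?thesis using that[OF Y] finite_relpow_Image[OF fin] finite_subset by blast
qed

lemma has_bad_map_finite_subset:
  assumes bad: "has_bad_map le A" and fin: "\<And>x. x \<in> A \<Longrightarrow> finite {y \<in> A. \<not> le x y}"
  shows "\<exists>V. finite V \<and> V \<subseteq> A \<and> has_bad_map le V"
proof -
  obtain B f where B: "barrier B" "f ` B \<subseteq> A" "\<not> good_map le B f"
    using bad unfolding has_bad_map_def by blast
  define R where "R = {(x, y). x \<in> A \<and> y \<in> A \<and> \<not> le x y}"
  have step: "(f s, f t) \<in> R" if "s \<in> B" "t \<in> B" "tri s t" for s t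
    using that B unfolding R_def good_map_def by blast
  have fin_R: "finite (R `` {x})" for x
    using fin[of x] unfolding R_def by (cases "x \<in> A") (auto simp: Image_def)
  obtain Y where Y: "Y \<subseteq> \<Union>B" "infinite Y" and V: "finite (f ` {t \<in> B. t \<subseteq> Y})"
    by (rule barrier_finite_image_restrict[OF B(1) step fin_R])
  have "has_bad_map le (f ` {t \<in> B. t \<subseteq> Y})"
    by (rule has_bad_map_restrict[OF B(1) B(3) Y]) blast
  then show ?thesis using V B(2) by blast
qed

lemma has_bad_map_not_directed:
  assumes qo: "quasi_order_on P le" and D: "down_closed P le D" "has_bad_map le D"
    and xy: "x \<in> D" "y \<in> D" and no_ub: "\<not> (\<exists>z\<in>D. le x z \<and> le y z)"
  shows "\<exists>D'. D' \<subset> D \<and> down_closed P le D' \<and> has_bad_map le D'"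
proof -
  have proper: "{z \<in> D. \<not> le a z} \<subset> D" if "a \<in> D" for a
    using that quasi_order_on_refl[OF qo] down_closed_subset[OF D(1)] by blast
  have closed: "down_closed P le {z \<in> D. \<not> le a z}" if "a \<in> D" for a
    using down_closed_not_above[OF qo D(1)] that down_closed_subset[OF D(1)] by blast
  have "D \<subseteq> {z \<in> D. \<not> le x z} \<union> {z \<in> D. \<not> le y z}" using no_ub by blast
  then have "has_bad_map le {z \<in> D. \<not> le x z} \<or> has_bad_map le {z \<in> D. \<not> le y z}"
    using has_bad_map_Un has_bad_map_mono[OF _ D(2)] by blast
  then show ?thesis
  proof
    assume "has_bad_map le {z \<in> D. \<not> le x z}"
    then show ?thesis using proper[OF xy(1)] closed[OF xy(1)] by blast
  next
    assume "has_bad_map le {z \<in> D. \<not> le y z}"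
    then show ?thesis using proper[OF xy(2)] closed[OF xy(2)] by blast
  qed
qed

lemma has_bad_map_greatest:
  assumes po: "poset_on P le" and D: "down_closed P le D" "has_bad_map le D"
    and m: "m \<in> D" "\<forall>z\<in>D. le z m"
  shows "\<exists>D'. D' \<subset> D \<and> down_closed P le D' \<and> has_bad_map le D'"
proof -
  have DP: "D \<subseteq> P" using D(1) by (rule down_closed_subset)
  have "has_bad_map le ({m} \<union> (D - {m}))" using D(2) m(1) by (simp add: insert_absorb)
  moreover have "le m m"
    using quasi_order_on_refl[OF poset_on_quasi_order_on[OF po]] m(1) DP by blast
  then have "\<not> has_bad_map le {m}" by (rule not_has_bad_map_singleton)
  ultimately have "has_bad_map le (D - {m})" using has_bad_map_Un[of le "{m}" "D - {m}"] by blast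
  moreover have "down_closed P le (D - {m})"
    unfolding down_closed_def
  proof (intro conjI ballI impI)
    show "D - {m} \<subseteq> P" using DP by blast
    fix z w assume z: "z \<in> D - {m}" and w: "w \<in> P" "le w z"
    have "w \<in> D" using down_closedD[OF D(1)] z w by blast
    moreover have "w \<noteq> m"
    proof
      assume "w = m"
      then have "z = m" using poset_on_antisym[OF po] z w m DP by blast
      then show False using z by blast
    qed
    ultimately show "w \<in> D - {m}" by blast
  qed
  ultimately show ?thesis using m(1) by blast
qed

lemma has_bad_map_nonprincipal_ideal:
  assumes po: "poset_on P le" and wqo: "wqo_on P le" and fin: "finite (nonprincipal_ideals P le)"
    and D: "ideal_of P le D" "\<not> principal le D" and bad: "has_bad_map le D"
  shows "\<exists>D'. D' \<subset> D \<and> down_closed P le D' \<and> has_bad_map le D'"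
proof -
  have qo: "quasi_order_on P le" using po by (rule poset_on_quasi_order_on)
  have closed: "down_closed P le D" using D(1) by (rule ideal_of_down_closed)
  define \<J> where "\<J> = {I \<in> nonprincipal_ideals P le. I \<subset> D}"
  define E where "E = \<Union>\<J>"
  have J: "down_closed P le I \<and> I \<subset> D" if "I \<in> \<J>" for I
    using that ideal_of_down_closed unfolding \<J>_def nonprincipal_ideals_def by blast
  have E_closed: "down_closed P le E"
    unfolding E_def using J by (intro down_closed_Union) blast
  have "finite \<J>" using fin unfolding \<J>_def by simp
  then have "E \<noteq> D" unfolding E_def using J by (rule ideal_of_neq_finite_Union[OF qo D(1)])
  then have E: "E \<subset> D" unfolding E_def using J by blast
  then have "has_bad_map le E \<or> has_bad_map le (D - E)"
    using bad has_bad_map_Un[of le E "D - E"] by (simp add: Un_absorb1)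
  moreover have "\<exists>V. V \<subseteq> D - E \<and> finite V \<and> has_bad_map le V" if "has_bad_map le (D - E)"
  proof -
    have "finite {y \<in> D - E. \<not> le x y}" if x: "x \<in> D - E" for x
    proof -
      let ?Dx = "{y \<in> D. \<not> le x y}"
      have "x \<in> P" using x down_closed_subset[OF closed] by blast
      then have Dx: "down_closed P le ?Dx" by (rule down_closed_not_above[OF qo closed])
      have "{y \<in> D - E. \<not> le x y} \<subseteq> ?Dx - \<Union>{I \<in> nonprincipal_ideals P le. I \<subseteq> ?Dx}"
        using x quasi_order_on_refl[OF qo \<open>x \<in> P\<close>] unfolding E_def \<J>_def by blast
      then show ?thesis
        using wqo_on_finite_Diff_nonprincipal_ideals[OF po wqo Dx] finite_subset by blast
    qed
    then show ?thesis using has_bad_map_finite_subset[OF that] by blast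
  qed
  moreover have "down_closure P le V \<subset> D \<and> down_closed P le (down_closure P le V)
      \<and> has_bad_map le (down_closure P le V)"
    if V: "V \<subseteq> D - E" "finite V" "has_bad_map le V" for V
  proof -
    have "V \<subseteq> D" "V \<subseteq> P" using V(1) down_closed_subset[OF closed] by auto
    then show ?thesis
      using down_closure_subset[OF closed] down_closure_finite_neq_nonprincipal_ideal[OF qo D V(2)]
        down_closed_down_closure[OF qo] has_bad_map_mono[OF subset_down_closure[OF qo] V(3)]
      by blast
  qed
  ultimately show ?thesis using E E_closed by blast
qed

lemma has_bad_map_down_closed_psubset:
  assumes po: "poset_on P le" and wqo: "wqo_on P le" and fin: "finite (nonprincipal_ideals P le)"
    and D: "down_closed P le D" "has_bad_map le D"
  shows "\<exists>D'. D' \<subset> D \<and> down_closed P le D' \<and> has_bad_map le D'"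
proof (cases "\<forall>x\<in>D. \<forall>y\<in>D. \<exists>z\<in>D. le x z \<and> le y z")
  case False
  then show ?thesis
    using has_bad_map_not_directed[OF poset_on_quasi_order_on[OF po] D] by blast
next
  case True
  then have ideal: "ideal_of P le D"
    using D has_bad_map_nonempty unfolding ideal_of_def down_closed_def by blast
  show ?thesis
  proof (cases "principal le D")
    case True
    then show ?thesis using has_bad_map_greatest[OF po D] unfolding principal_def by blast
  next
    case False
    then show ?thesis using has_bad_map_nonprincipal_ideal[OF po wqo fin ideal _ D(2)] by blast
  qed
qed

lemma wqo_on_no_decreasing_down_closed:
  assumes wqo: "wqo_on P le" and D: "\<And>n. down_closed P le (D n)" and dec: "\<And>n. D (Suc n) \<subset> D n"
  shows False
proof -
  have "\<forall>n. \<exists>x. x \<in> D n - D (Suc n)" using dec by blast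
  then obtain x where x: "\<And>n. x n \<in> D n - D (Suc n)" by metis
  have xP: "x n \<in> P" for n using x down_closed_subset[OF D] by blast
  obtain \<phi> :: "nat \<Rightarrow> nat" where \<phi>: "strict_mono \<phi>"
    and incr: "\<And>i j. i < j \<Longrightarrow> le (x (\<phi> i)) (x (\<phi> j))"
    using wqo_on_increasing_subseq[where g = x, OF wqo xP] by blast
  have "D (\<phi> 1) \<subseteq> D (Suc (\<phi> 0))"
    using lift_Suc_antimono_le[of D] dec strict_monoD[OF \<phi>, of 0 1]
    by (simp add: less_eq_Suc_le psubset_imp_subset)
  then have "x (\<phi> 1) \<in> D (Suc (\<phi> 0))" using x by blast
  then have "x (\<phi> 0) \<in> D (Suc (\<phi> 0))" using down_closedD[OF D _ xP incr[of 0 1]] by simp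
  then show False using x by blast
qed

lemma wqo_on_no_bad_map:
  assumes po: "poset_on P le" and wqo: "wqo_on P le" and fin: "finite (nonprincipal_ideals P le)"
  shows "\<not> has_bad_map le P"
proof
  assume "has_bad_map le P"
  moreover have "down_closed P le P" unfolding down_closed_def by blast
  ultimately obtain D where "\<forall>n. (down_closed P le (D n) \<and> has_bad_map le (D n)) \<and> D (Suc n) \<subset> D n"
    using dependent_nat_choice[of "\<lambda>_ D. down_closed P le D \<and> has_bad_map le D" "\<lambda>_ D D'. D' \<subset> D"]
      has_bad_map_down_closed_psubset[OF po wqo fin] by blast
  then show False using wqo_on_no_decreasing_down_closed[OF wqo] by blast
qed

theorem corollary1p3:
  fixes P :: "'a set" and le :: "'a \<Rightarrow> 'a \<Rightarrow> bool"
  assumes "poset_on P le"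
    and "wqo_on P le"
    and "finite (nonprincipal_ideals P le)"
  shows "bqo_on P le"
  using wqo_on_no_bad_map[OF assms] poset_on_quasi_order_on[OF assms(1)]
  unfolding bqo_on_def alpha_bqo_on_def has_bad_map_def by blast

end
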